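(* Let $p\geq 5$ be a prime and let $\mathcal{A}$ be a cyclotomic $S$-ring over $C_{3p}=C_3\times C_p$ such that $\mathrm{rk}(\mathcal{A}_{C_p})=2$ and $\mathcal{A}\neq\mathcal{A}_{C_3}\otimes\mathcal{A}_{C_p}$. Then $\mathcal{A}=\mathcal{A}_0$.
   Context: For a finite group $G$ with identity $e$ and $X\subseteq G$ write $\underline{X}=\sum_{x\in X}x$. An $S$-ring over $G$ is a subring $\mathcal{A}\subseteq\mathbb{Z}G$ spanned by $\{\underline{X}:X\in\mathcal{S}(\mathcal{A})\}$ for a partition $\mathcal{S}(\mathcal{A})$ of $G$ (basic sets) containing $\{e\}$ and closed under inversion; $\mathrm{rk}(\mathcal{A})=|\mathcal{S}(\mathcal{A})|$. A subgroup $U$ with $\underline{U}\in\mathcal{A}$ is an $\mathcal{A}$-subgroup, and then $\mathcal{A}_U$ is the $S$-ring over $U$ whose basic sets are the basic sets of $\mathcal{A}$ contained in $U$. For $K\leq\mathrm{Aut}(G)$, $\mathrm{Cyc}(K,G)$ is the $S$-ring whose basic sets are the orbits of $K$ on $G$; such $S$-rings are called cyclotomic. If $\mathcal{A}_1,\mathcal{A}_2$ are $S$-rings over $G_1,G_2$, the tensor product $\mathcal{A}_1\otimes\mathcal{A}_2$ is the $S$-ring over $G_1\times G_2$ with basic sets $X_1\times X_2$, $X_i\in\mathcal{S}(\mathcal{A}_i)$. Identify $\mathrm{Aut}(C_{3p})=\mathrm{Aut}(C_3)\times\mathrm{Aut}(C_p)$. Let $W_0$ be the subgroup of $\mathrm{Aut}(C_3)\times\mathrm{Aut}(C_p)$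 consisting of pairs $(\alpha,\beta)$ such that $\alpha$ is trivial if and only if $\beta$ lies in the subgroup of index $2$ of $\mathrm{Aut}(C_p)$ (the unique nontrivial subdirect product of $\mathrm{Aut}(C_3)$ and $\mathrm{Aut}(C_p)$), and let $\mathcal{A}_0=\mathrm{Cyc}(W_0,C_{3p})$. *)

theory Defs
  imports "HOL-Algebra.Algebra"
begin

text \<open>S-rings are represented by their partition of basic sets S(A).
  The cyclotomic S-ring Cyc(K,G) has as basic sets the K-orbits on G.\<close>

definition cyc_basic :: "('a, 'b) monoid_scheme \<Rightarrow> ('a \<Rightarrow> 'a) set \<Rightarrow> 'a set set" where
  "cyc_basic G K = {{\<sigma> x | \<sigma>. \<sigma> \<in> K} | x. x \<in> carrier G}"

definition restr_basic :: "'a set set \<Rightarrow> 'a set \<Rightarrow> 'a set set" where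
  "restr_basic S U = {Y. Y \<in> S \<and> Y \<subseteq> U}"

definition rk :: "'a set set \<Rightarrow> nat" where
  "rk S = card S"

text \<open>Tensor product A_U (x) A_V, transported to G = U x V via (u,v) |-> u v.\<close>
definition tensor_basic ::
  "('a, 'b) monoid_scheme \<Rightarrow> 'a set set \<Rightarrow> 'a set set \<Rightarrow> 'a set set" where
  "tensor_basic G S1 S2 = {(\<lambda>(x, y). x \<otimes>\<^bsub>G\<^esub> y) ` (P \<times> Y) | P Y. P \<in> S1 \<and> Y \<in> S2}"

definition C3p :: "nat \<Rightarrow> (int \<times> int) monoid" where
  "C3p p = integer_mod_group 3 \<times>\<times> integer_mod_group p"

definition C3_sub :: "nat \<Rightarrow> (int \<times> int) set" where
  "C3_sub p = carrier (integer_mod_group 3) \<times> {0}"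

definition Cp_sub :: "nat \<Rightarrow> (int \<times> int) set" where
  "Cp_sub p = {0} \<times> carrier (integer_mod_group p)"

definition index2_sub :: "nat \<Rightarrow> (int \<Rightarrow> int) set" where
  "index2_sub p = (THE H. subgroup H (AutoGroup (integer_mod_group p)) \<and>
       card (carrier (AutoGroup (integer_mod_group p))) = 2 * card H)"

text \<open>W_0, viewed inside Aut(C_3 x C_p) = Aut(C_3) x Aut(C_p):
  automorphisms acting as (a,b) |-> (alpha a, beta b) with
  alpha trivial iff beta in the index-2 subgroup.\<close>
definition W0 :: "nat \<Rightarrow> (int \<times> int \<Rightarrow> int \<times> int) set" where
  "W0 p = {\<sigma> \<in> auto (C3p p). \<exists>\<alpha> \<in> auto (integer_mod_group 3). \<exists>\<beta> \<in> auto (integer_mod_group p).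
      (\<forall>a \<in> carrier (integer_mod_group 3). \<forall>b \<in> carrier (integer_mod_group p).
          \<sigma> (a, b) = (\<alpha> a, \<beta> b)) \<and>
      ((\<forall>a \<in> carrier (integer_mod_group 3). \<alpha> a = a) \<longleftrightarrow> \<beta> \<in> index2_sub p)}"

end

theory Submission
  imports Defs
begin

(* Every automorphism of C_3 x C_p = Z/3 x Z/p is multiplication by a unit (u, v) of the ring
   Z/3 x Z/p, so K is a subgroup T of (Z/3)^* x (Z/p)^* and the basic sets are the T-orbits.
   Rank 2 on C_p says that T projects onto (Z/p)^*, and since A is not the tensor product of its
   restrictions, T is not the product of its two projections. As (Z/3)^* = {1, 2} has order 2,
   T is then the graph of a surjection (Z/p)^* -> {1, 2}: the pairs (1, v) with v in a subgroup H
   of index 2 and the pairs (2, v) with v outside H. An index-2 subgroup contains all squares,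
   and the squares already make up half of (Z/p)^*, so H is the unique subgroup of index 2
   and T corresponds exactly to W_0. *)

section \<open>Automorphisms of the cyclic group of order n\<close>

lemma inj_on_mult_mod:
  assumes "coprime u (int n)"
  shows "inj_on (\<lambda>x. (u * x) mod int n) {0..<int n}"
proof (rule inj_onI)
  fix x y assume "x \<in> {0..<int n}" "y \<in> {0..<int n}" "(u * x) mod int n = (u * y) mod int n"
  then have "int n dvd u * (x - y)"
    by (simp add: mod_eq_dvd_iff right_diff_distrib)
  then have "int n dvd x - y"
    using assms by (simp add: coprime_dvd_mult_right_iff coprime_commute)
  then show "x = y"
    using \<open>x \<in> _\<close> \<open>y \<in> _\<close> by (metis atLeastLessThan_iff mod_eq_dvd_iff mod_pos_pos_trivial)
qed

definition scale_mod :: "nat \<Rightarrow> int \<Rightarrow> int \<Rightarrow> int" where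
  "scale_mod n u = (\<lambda>x\<in>{0..<int n}. (u * x) mod int n)"

lemma scale_mod_in_auto:
  assumes "n > 0" and "coprime u (int n)"
  shows "scale_mod n u \<in> auto (integer_mod_group n)"
proof -
  have carrier: "carrier (integer_mod_group n) = {0..<int n}"
    using \<open>n > 0\<close> by (simp add: carrier_integer_mod_group)
  have hom: "scale_mod n u \<in> hom (integer_mod_group n) (integer_mod_group n)"
    using \<open>n > 0\<close> by (auto simp: hom_def carrier scale_mod_def mod_add_eq mod_mult_right_eq distrib_left)
  have "inj_on (scale_mod n u) {0..<int n}"
    unfolding scale_mod_def inj_on_restrict_eq by (rule inj_on_mult_mod[OF assms(2)])
  moreover have "scale_mod n u ` {0..<int n} \<subseteq> {0..<int n}"
    using \<open>n > 0\<close> by (auto simp: scale_mod_def)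
  ultimately have "bij_betw (scale_mod n u) {0..<int n} {0..<int n}"
    by (simp add: bij_betw_def endo_inj_surj)
  then show ?thesis
    using hom by (simp add: auto_def Bij_def carrier scale_mod_def)
qed

lemma auto_integer_mod_group:
  assumes "n \<ge> 2" and "\<sigma> \<in> auto (integer_mod_group n)"
  shows "\<sigma> = scale_mod n (\<sigma> 1)" and "\<sigma> 1 \<in> {1..<int n}"
proof -
  have carrier: "carrier (integer_mod_group n) = {0..<int n}"
    using \<open>n \<ge> 2\<close> by (simp add: carrier_integer_mod_group)
  have hom: "\<sigma> \<in> hom (integer_mod_group n) (integer_mod_group n)"
    and ext: "\<sigma> \<in> extensional {0..<int n}"
    and inj: "inj_on \<sigma> {0..<int n}"
    using assms(2) by (auto simp: auto_def Bij_def bij_betw_def carrier)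
  have one: "1 \<in> carrier (integer_mod_group n)"
    using \<open>n \<ge> 2\<close> by simp
  have as_multiple: "\<sigma> x = (\<sigma> 1 * x) mod int n" if "x \<in> {0..<int n}" for x
  proof -
    \<comment> \<open>every residue is a multiple of the generator 1\<close>
    have "\<sigma> (1 [^]\<^bsub>integer_mod_group n\<^esub> nat x) = \<sigma> 1 [^]\<^bsub>integer_mod_group n\<^esub> nat x"
      by (rule hom_nat_pow[OF hom one]) simp_all
    then show ?thesis
      using that by (simp add: mult.commute)
  qed
  show "\<sigma> = scale_mod n (\<sigma> 1)"
    using as_multiple ext by (auto simp: scale_mod_def extensional_def)
  have "\<sigma> 1 \<in> {0..<int n}"
    using hom one carrier by (auto simp: hom_def)
  moreover have "\<sigma> 1 \<noteq> \<sigma> 0"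
    using inj \<open>n \<ge> 2\<close> by (auto dest: inj_onD)
  moreover have "\<sigma> 0 = 0"
    using as_multiple[of 0] \<open>n \<ge> 2\<close> by simp
  ultimately show "\<sigma> 1 \<in> {1..<int n}"
    by auto
qed

lemma inj_on_scale_mod:
  assumes "n \<ge> 2"
  shows "inj_on (scale_mod n) {0..<int n}"
proof (rule inj_onI)
  fix u v assume "u \<in> {0..<int n}" "v \<in> {0..<int n}" "scale_mod n u = scale_mod n v"
  moreover have "scale_mod n w 1 = w mod int n" for w
    using \<open>n \<ge> 2\<close> by (simp add: scale_mod_def)
  ultimately show "u = v"
    by (metis atLeastLessThan_iff mod_pos_pos_trivial)
qed

lemma coprime_unit_mod_prime:
  "Factorial_Ring.prime p \<Longrightarrow> u \<in> {1..<int p} \<Longrightarrow> coprime u (int p)"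
  by (metis prime_nat_int_transfer prime_imp_coprime coprime_commute atLeastLessThan_iff
      zdvd_imp_le linorder_not_le zero_less_one order_less_le_trans)

lemma carrier_AutoGroup_integer_mod_group:
  assumes "Factorial_Ring.prime p"
  shows "carrier (AutoGroup (integer_mod_group p)) = scale_mod p ` {1..<int p}"
proof
  have "p \<ge> 2"
    using assms prime_ge_2_nat by blast
  show "carrier (AutoGroup (integer_mod_group p)) \<subseteq> scale_mod p ` {1..<int p}"
  proof
    fix \<sigma> assume "\<sigma> \<in> carrier (AutoGroup (integer_mod_group p))"
    then have "\<sigma> \<in> auto (integer_mod_group p)"
      by (simp add: AutoGroup_def)
    then have "\<sigma> = scale_mod p (\<sigma> 1)" "\<sigma> 1 \<in> {1..<int p}"
      by (rule auto_integer_mod_group[OF \<open>p \<ge> 2\<close>])+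
    then show "\<sigma> \<in> scale_mod p ` {1..<int p}"
      by (rule image_eqI)
  qed
  show "scale_mod p ` {1..<int p} \<subseteq> carrier (AutoGroup (integer_mod_group p))"
    using scale_mod_in_auto coprime_unit_mod_prime[OF assms] \<open>p \<ge> 2\<close> by (auto simp: AutoGroup_def)
qed

lemma AutoGroup_mult: "\<sigma> \<in> auto G \<Longrightarrow> \<tau> \<in> auto G \<Longrightarrow> \<sigma> \<otimes>\<^bsub>AutoGroup G\<^esub> \<tau> = compose (carrier G) \<sigma> \<tau>"
  by (simp add: AutoGroup_def BijGroup_def auto_def)

lemma scale_mod_mult:
  assumes "n > 0"
  shows "compose {0..<int n} (scale_mod n u) (scale_mod n v) = scale_mod n ((u * v) mod int n)"
proof
  fix x
  have "(v * x) mod int n \<in> {0..<int n}"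
    using \<open>n > 0\<close> by simp
  then show "compose {0..<int n} (scale_mod n u) (scale_mod n v) x = scale_mod n ((u * v) mod int n) x"
    by (simp add: compose_def scale_mod_def mod_mult_right_eq mod_mult_left_eq mult.assoc)
qed

lemma scale_mod_mult_AutoGroup:
  assumes "Factorial_Ring.prime p" and "u \<in> {1..<int p}" and "v \<in> {1..<int p}"
  shows "scale_mod p u \<otimes>\<^bsub>AutoGroup (integer_mod_group p)\<^esub> scale_mod p v = scale_mod p ((u * v) mod int p)"
proof -
  have "p > 0"
    using assms(1) prime_gt_0_nat by blast
  have "scale_mod p u \<in> auto (integer_mod_group p)" "scale_mod p v \<in> auto (integer_mod_group p)"
    using carrier_AutoGroup_integer_mod_group[OF assms(1)] assms(2,3) by (auto simp: AutoGroup_def)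
  then show ?thesis
    using \<open>p > 0\<close> by (simp add: AutoGroup_mult scale_mod_mult carrier_integer_mod_group)
qed

lemma one_AutoGroup_integer_mod_group: "n > 0 \<Longrightarrow> \<one>\<^bsub>AutoGroup (integer_mod_group n)\<^esub> = scale_mod n 1"
  by (auto simp: AutoGroup_def BijGroup_def scale_mod_def carrier_integer_mod_group)

section \<open>The subgroup of index two of Aut(C_p)\<close>

lemma (in group) index_two_subgroup_contains_squares:
  assumes "finite (carrier G)" and H: "subgroup H G" and index: "card (carrier G) = 2 * card H"
    and g: "g \<in> carrier G"
  shows "g \<otimes> g \<in> H"
proof (rule ccontr)
  assume "g \<otimes> g \<notin> H"
  then have "g \<notin> H"
    using subgroup.m_closed[OF H] by blast
  have H_carrier: "H \<subseteq> carrier G"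
    by (rule subgroup.subset[OF H])
  \<comment> \<open>the coset \<open>g H\<close> is the complement of \<open>H\<close>, so it contains \<open>g g\<close>\<close>
  have "(\<lambda>h. g \<otimes> h) ` H \<subseteq> carrier G - H"
  proof
    fix y assume "y \<in> (\<lambda>h. g \<otimes> h) ` H"
    then obtain h where "h \<in> H" and y: "y = g \<otimes> h"
      by blast
    have "y \<notin> H"
    proof
      assume "y \<in> H"
      then have "g \<otimes> h \<otimes> inv h \<in> H"
        using H \<open>h \<in> H\<close> y by (simp add: subgroup.m_closed subgroup.m_inv_closed)
      then show False
        using \<open>g \<notin> H\<close> \<open>h \<in> H\<close> H_carrier g by (simp add: m_assoc subsetD)
    qed
    then show "y \<in> carrier G - H"
      using g H_carrier \<open>h \<in> H\<close> y by auto
  qed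
  moreover have "card ((\<lambda>h. g \<otimes> h) ` H) = card (carrier G - H)"
  proof -
    have "inj_on (\<lambda>h. g \<otimes> h) H"
      using g H_carrier by (auto intro!: inj_onI simp: subsetD)
    moreover have "finite H"
      using assms(1) H_carrier finite_subset by blast
    ultimately show ?thesis
      using card_Diff_subset[of H "carrier G"] index H_carrier by (simp add: card_image)
  qed
  ultimately have "(\<lambda>h. g \<otimes> h) ` H = carrier G - H"
    using assms(1) by (simp add: card_subset_eq)
  then obtain h where "h \<in> H" "g \<otimes> g = g \<otimes> h"
    using \<open>g \<otimes> g \<notin> H\<close> g by (metis DiffI image_iff m_closed)
  then show False
    using \<open>g \<notin> H\<close> g H_carrier by (metis l_cancel subsetD)
qed

lemma square_mod_prime_unit:
  assumes "Factorial_Ring.prime p" and "v \<in> {1..<int p}"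
  shows "(v * v) mod int p \<in> {1..<int p}"
proof -
  have "Factorial_Ring.prime (int p)"
    using assms(1) by (simp add: prime_nat_int_transfer)
  then have "\<not> int p dvd v * v"
    using assms(2) by (auto simp: prime_dvd_mult_iff dest: zdvd_imp_le)
  then show ?thesis
    using prime_gt_0_nat[OF assms(1)] pos_mod_sign[of "int p" "v * v"] pos_mod_bound[of "int p" "v * v"]
    by (auto simp: dvd_eq_mod_eq_0)
qed

lemma square_roots_mod_prime:
  assumes "Factorial_Ring.prime p" and "v \<in> {1..<int p}" and "v\<^sub>0 \<in> {1..<int p}"
    and "(v * v) mod int p = (v\<^sub>0 * v\<^sub>0) mod int p"
  shows "v = v\<^sub>0 \<or> v = int p - v\<^sub>0"
proof -
  have "Factorial_Ring.prime (int p)"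
    using assms(1) by (simp add: prime_nat_int_transfer)
  moreover have "int p dvd (v - v\<^sub>0) * (v + v\<^sub>0)"
    using assms(4) by (simp add: mod_eq_dvd_iff algebra_simps)
  ultimately have "int p dvd v - v\<^sub>0 \<or> int p dvd v + v\<^sub>0 - int p"
    by (auto simp: prime_dvd_mult_iff intro: dvd_diff)
  moreover have "\<bar>v - v\<^sub>0\<bar> < int p" "\<bar>v + v\<^sub>0 - int p\<bar> < int p"
    using assms(2,3) by auto
  moreover have "x = 0" if "int p dvd x" "\<bar>x\<bar> < int p" for x
    using that dvd_imp_le_int[of x "int p"] by (cases "x = 0") auto
  ultimately have "v - v\<^sub>0 = 0 \<or> v + v\<^sub>0 - int p = 0"
    by blast
  then show ?thesis
    by auto
qed

lemma card_squares_mod_prime: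
  assumes "Factorial_Ring.prime p"
  shows "card {1..<int p} \<le> 2 * card ((\<lambda>v. (v * v) mod int p) ` {1..<int p})"
proof -
  let ?U = "{1..<int p}" and ?sq = "\<lambda>v. (v * v) mod int p"
  have "?U = (\<Union>y \<in> ?sq ` ?U. {v \<in> ?U. ?sq v = y})"
    by blast
  then have "card ?U \<le> (\<Sum>y \<in> ?sq ` ?U. card {v \<in> ?U. ?sq v = y})"
    using card_UN_le[of "?sq ` ?U" "\<lambda>y. {v \<in> ?U. ?sq v = y}"] by simp
  also have "\<dots> \<le> (\<Sum>y \<in> ?sq ` ?U. 2)"
  proof (rule sum_mono)
    fix y assume "y \<in> ?sq ` ?U"
    then obtain v\<^sub>0 where "v\<^sub>0 \<in> ?U" "y = ?sq v\<^sub>0"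
      by blast
    then have "{v \<in> ?U. ?sq v = y} \<subseteq> {v\<^sub>0, int p - v\<^sub>0}"
      using square_roots_mod_prime[OF assms] by blast
    moreover have "card {v\<^sub>0, int p - v\<^sub>0} \<le> 2"
      by (simp add: card_insert_if)
    ultimately show "card {v \<in> ?U. ?sq v = y} \<le> 2"
      by (meson card_mono finite.emptyI finite_insert le_trans)
  qed
  finally show ?thesis
    by simp
qed

lemma index2_sub_eqI:
  assumes prime: "Factorial_Ring.prime p" and H: "subgroup H (AutoGroup (integer_mod_group p))"
    and index: "card (carrier (AutoGroup (integer_mod_group p))) = 2 * card H"
  shows "index2_sub p = H"
proof -
  let ?A = "AutoGroup (integer_mod_group p)" and ?U = "{1..<int p}"
  let ?Sq = "scale_mod p ` (\<lambda>v. (v * v) mod int p) ` ?U"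
  have "p \<ge> 2"
    using prime prime_ge_2_nat by blast
  have carrier: "carrier ?A = scale_mod p ` ?U"
    by (rule carrier_AutoGroup_integer_mod_group[OF prime])
  have inj: "inj_on (scale_mod p) ?U"
    using inj_on_scale_mod[OF \<open>p \<ge> 2\<close>] by (rule inj_on_subset) auto
  have squares: "(\<lambda>v. (v * v) mod int p) ` ?U \<subseteq> ?U"
    using square_mod_prime_unit[OF prime] by blast
  have "H' = ?Sq" if H': "subgroup H' ?A" "card (carrier ?A) = 2 * card H'" for H'
  proof (rule card_seteq[symmetric])
    show "finite H'"
      using subgroup.subset[OF H'(1)] carrier by (simp add: finite_subset)
    show "?Sq \<subseteq> H'"
    proof clarify
      fix v assume "v \<in> ?U"
      then have "scale_mod p v \<otimes>\<^bsub>?A\<^esub> scale_mod p v \<in> H'"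
        using group.index_two_subgroup_contains_squares[OF group.AutoGroup[OF group_integer_mod_group] _ H'] carrier
        by auto
      then show "scale_mod p ((v * v) mod int p) \<in> H'"
        using scale_mod_mult_AutoGroup[OF prime \<open>v \<in> ?U\<close> \<open>v \<in> ?U\<close>] by simp
    qed
    have "card (carrier ?A) = card ?U"
      using carrier card_image[OF inj] by simp
    moreover have "card ?Sq = card ((\<lambda>v. (v * v) mod int p) ` ?U)"
      using card_image[OF inj_on_subset[OF inj squares]] .
    ultimately show "card H' \<le> card ?Sq"
      using card_squares_mod_prime[OF prime] H'(2) by linarith
  qed
  then show ?thesis
    unfolding index2_sub_def using H index by (intro the_equality) blast+
qed

lemma subgroup_scale_mod_image:
  assumes prime: "Factorial_Ring.prime p" and H: "H \<subseteq> {1..<int p}" and "1 \<in> H"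
    and mult: "\<And>v w. v \<in> H \<Longrightarrow> w \<in> H \<Longrightarrow> (v * w) mod int p \<in> H"
    and inverse: "\<And>v. v \<in> H \<Longrightarrow> \<exists>w \<in> H. (v * w) mod int p = 1"
  shows "subgroup (scale_mod p ` H) (AutoGroup (integer_mod_group p))"
proof -
  let ?A = "AutoGroup (integer_mod_group p)"
  have group: "group ?A"
    by (rule group.AutoGroup[OF group_integer_mod_group])
  have carrier: "scale_mod p ` H \<subseteq> carrier ?A"
    using carrier_AutoGroup_integer_mod_group[OF prime] H by auto
  have product: "scale_mod p v \<otimes>\<^bsub>?A\<^esub> scale_mod p w = scale_mod p ((v * w) mod int p)"
    if "v \<in> H" "w \<in> H" for v w
    using scale_mod_mult_AutoGroup[OF prime] that H by blast
  show ?thesis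
  proof (rule group.subgroupI[OF group carrier])
    show "scale_mod p ` H \<noteq> {}"
      using \<open>1 \<in> H\<close> by blast
  next
    fix \<sigma> assume "\<sigma> \<in> scale_mod p ` H"
    then obtain v where "v \<in> H" and \<sigma>: "\<sigma> = scale_mod p v"
      by blast
    then obtain w where "w \<in> H" and w: "(v * w) mod int p = 1"
      using inverse by blast
    have "scale_mod p w \<otimes>\<^bsub>?A\<^esub> \<sigma> = \<one>\<^bsub>?A\<^esub>"
      using product[OF \<open>w \<in> H\<close> \<open>v \<in> H\<close>] w \<sigma> prime_gt_0_nat[OF prime]
      by (simp add: one_AutoGroup_integer_mod_group mult.commute)
    then have "inv\<^bsub>?A\<^esub> \<sigma> = scale_mod p w"
      using group.inv_equality[OF group] carrier \<open>v \<in> H\<close> \<open>w \<in> H\<close> \<sigma> by blast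
    then show "inv\<^bsub>?A\<^esub> \<sigma> \<in> scale_mod p ` H"
      using \<open>w \<in> H\<close> by blast
  next
    fix \<sigma> \<tau> assume "\<sigma> \<in> scale_mod p ` H" "\<tau> \<in> scale_mod p ` H"
    then show "\<sigma> \<otimes>\<^bsub>?A\<^esub> \<tau> \<in> scale_mod p ` H"
      using product mult by auto
  qed
qed

section \<open>Automorphisms of C_3 x C_p\<close>

lemma carrier_C3p: "p > 0 \<Longrightarrow> carrier (C3p p) = {0..<3} \<times> {0..<int p}"
  by (simp add: C3p_def carrier_integer_mod_group)

lemma mult_C3p [simp]: "(a, b) \<otimes>\<^bsub>C3p p\<^esub> (c, d) = ((a + c) mod 3, (b + d) mod int p)"
  by (simp add: C3p_def)

lemma one_C3p [simp]: "\<one>\<^bsub>C3p p\<^esub> = (0, 0)"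
  by (simp add: C3p_def)

lemma pow_DirProd: "(a, b) [^]\<^bsub>G \<times>\<times> H\<^esub> (k::nat) = (a [^]\<^bsub>G\<^esub> k, b [^]\<^bsub>H\<^esub> k)"
  by (induction k) (simp_all add: DirProd_def)

lemma pow_C3p [simp]: "(a, b) [^]\<^bsub>C3p p\<^esub> (k::nat) = ((int k * a) mod 3, (int k * b) mod int p)"
  by (simp add: C3p_def pow_DirProd)

lemma group_C3p: "group (C3p p)"
  by (simp add: C3p_def DirProd_group)

text \<open>Every automorphism of \<open>C3p p\<close> acts on its carrier as multiplication by a unit of the ring
  \<open>\<int>/3 \<times> \<int>/p\<close>; \<open>aut_coords\<close> reads this unit off the images of the generators.\<close>

definition ring_mult_3p :: "nat \<Rightarrow> int \<times> int \<Rightarrow> int \<times> int \<Rightarrow> int \<times> int" where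
  "ring_mult_3p p w z = ((fst w * fst z) mod 3, (snd w * snd z) mod int p)"

definition aut_coords :: "(int \<times> int \<Rightarrow> int \<times> int) \<Rightarrow> int \<times> int" where
  "aut_coords \<sigma> = (fst (\<sigma> (1, 0)), snd (\<sigma> (0, 1)))"

lemma auto_C3p_generators:
  assumes "coprime 3 p" and "p \<ge> 2" and \<sigma>: "\<sigma> \<in> auto (C3p p)"
  shows "\<sigma> (1, 0) = (fst (aut_coords \<sigma>), 0)" and "\<sigma> (0, 1) = (0, snd (aut_coords \<sigma>))"
proof -
  let ?G = "C3p p"
  have hom: "\<sigma> \<in> hom ?G ?G"
    using \<sigma> by (simp add: auto_def)
  have carrier: "carrier ?G = {0..<3} \<times> {0..<int p}"
    using \<open>p \<ge> 2\<close> by (simp add: carrier_C3p)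
  then have in_carrier: "(1, 0) \<in> carrier ?G" "(0, 1) \<in> carrier ?G"
    using \<open>p \<ge> 2\<close> by auto
  obtain x\<^sub>1 y\<^sub>1 x\<^sub>2 y\<^sub>2 where 1: "\<sigma> (1, 0) = (x\<^sub>1, y\<^sub>1)" and 2: "\<sigma> (0, 1) = (x\<^sub>2, y\<^sub>2)"
    by fastforce
  have images: "(x\<^sub>1, y\<^sub>1) \<in> carrier ?G" "(x\<^sub>2, y\<^sub>2) \<in> carrier ?G"
    using hom in_carrier 1 2 by (metis hom_in_carrier)+
  \<comment> \<open>\<open>\<sigma>\<close> preserves the coprime orders 3 and p of the two generators\<close>
  have "(x\<^sub>1, y\<^sub>1) [^]\<^bsub>?G\<^esub> (3::nat) = \<one>\<^bsub>?G\<^esub>" "(x\<^sub>2, y\<^sub>2) [^]\<^bsub>?G\<^esub> p = \<one>\<^bsub>?G\<^esub>"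
    using hom_nat_pow[OF hom in_carrier(1) group_C3p group_C3p, of 3]
      hom_nat_pow[OF hom in_carrier(2) group_C3p group_C3p, of p]
      hom_one[OF hom group_C3p group_C3p] 1 2 by simp_all
  then have "int p dvd 3 * y\<^sub>1" "3 dvd int p * x\<^sub>2"
    by (simp_all add: mod_eq_0_iff_dvd)
  moreover have "coprime (int p) 3" "coprime 3 (int p)"
    using \<open>coprime 3 p\<close> by (metis coprime_commute coprime_int_iff of_nat_numeral)+
  ultimately have "y\<^sub>1 = 0" "x\<^sub>2 = 0"
    using images carrier by (auto simp: coprime_dvd_mult_right_iff dest: zdvd_imp_le)
  then show "\<sigma> (1, 0) = (fst (aut_coords \<sigma>), 0)" "\<sigma> (0, 1) = (0, snd (aut_coords \<sigma>))"
    using 1 2 by (simp_all add: aut_coords_def)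
qed

lemma auto_C3p:
  assumes "coprime 3 p" and "p \<ge> 2" and \<sigma>: "\<sigma> \<in> auto (C3p p)"
  shows "\<And>z. z \<in> carrier (C3p p) \<Longrightarrow> \<sigma> z = ring_mult_3p p (aut_coords \<sigma>) z"
    and "aut_coords \<sigma> \<in> {1..<3} \<times> {1..<int p}"
proof -
  let ?G = "C3p p"
  obtain u v where coords: "aut_coords \<sigma> = (u, v)"
    by fastforce
  have hom: "\<sigma> \<in> hom ?G ?G" and inj: "inj_on \<sigma> (carrier ?G)"
    using \<sigma> by (auto simp: auto_def Bij_def bij_betw_def)
  have carrier: "carrier ?G = {0..<3} \<times> {0..<int p}"
    using \<open>p \<ge> 2\<close> by (simp add: carrier_C3p)
  then have in_carrier: "(1, 0) \<in> carrier ?G" "(0, 1) \<in> carrier ?G" "(0, 0) \<in> carrier ?G"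
    using \<open>p \<ge> 2\<close> by auto
  note generators = auto_C3p_generators[OF assms, unfolded coords fst_conv snd_conv]
  show "\<sigma> z = ring_mult_3p p (aut_coords \<sigma>) z" if "z \<in> carrier ?G" for z
  proof -
    obtain a b where z: "z = (a, b)" "a \<in> {0..<3}" "b \<in> {0..<int p}"
      using \<open>z \<in> carrier ?G\<close> carrier by (cases z) auto
    have "(a, 0) = (1, 0) [^]\<^bsub>?G\<^esub> nat a" "(0, b) = (0, 1) [^]\<^bsub>?G\<^esub> nat b"
      using z by simp_all
    then have "\<sigma> (a, 0) = ((a * u) mod 3, 0)" "\<sigma> (0, b) = (0, (b * v) mod int p)"
      using hom_nat_pow[OF hom in_carrier(1) group_C3p group_C3p, of "nat a"]
        hom_nat_pow[OF hom in_carrier(2) group_C3p group_C3p, of "nat b"] generators z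
      by simp_all
    moreover have "(a, b) = (a, 0) \<otimes>\<^bsub>?G\<^esub> (0, b)" "(a, 0) \<in> carrier ?G" "(0, b) \<in> carrier ?G"
      using z carrier by auto
    ultimately have "\<sigma> (a, b) = ((a * u) mod 3, 0) \<otimes>\<^bsub>?G\<^esub> (0, (b * v) mod int p)"
      using hom by (metis hom_mult)
    then show ?thesis
      using z coords by (simp add: ring_mult_3p_def mult.commute)
  qed
  have "\<sigma> (0, 0) = (0, 0)"
    using hom_one[OF hom group_C3p group_C3p] by simp
  then have "u \<noteq> 0" "v \<noteq> 0"
    using inj_onD[OF inj _ in_carrier(1,3)] inj_onD[OF inj _ in_carrier(2,3)] generators by auto
  moreover have "(u, 0) \<in> carrier ?G" "(0, v) \<in> carrier ?G"
    using generators in_carrier hom by (metis hom_in_carrier)+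
  ultimately show "aut_coords \<sigma> \<in> {1..<3} \<times> {1..<int p}"
    using carrier coords by auto
qed

lemma aut_coords_inj:
  assumes "coprime 3 p" and "p \<ge> 2" and "\<sigma> \<in> auto (C3p p)" and "\<tau> \<in> auto (C3p p)"
    and "aut_coords \<sigma> = aut_coords \<tau>"
  shows "\<sigma> = \<tau>"
proof
  fix z
  show "\<sigma> z = \<tau> z"
  proof (cases "z \<in> carrier (C3p p)")
    case True
    then show ?thesis
      using auto_C3p(1)[OF assms(1,2,3) True] auto_C3p(1)[OF assms(1,2,4) True] assms(5) by simp
  next
    case False
    then show ?thesis
      using assms(3,4) by (simp add: auto_def Bij_def extensional_arb[OF _ False])
  qed
qed

lemma aut_coords_mem_iff:
  assumes "coprime 3 p" and "p \<ge> 2" and "K \<subseteq> auto (C3p p)" and "\<sigma> \<in> auto (C3p p)"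
  shows "\<sigma> \<in> K \<longleftrightarrow> aut_coords \<sigma> \<in> aut_coords ` K"
  using aut_coords_inj[OF assms(1,2,4)] assms(3) by blast

lemma aut_coords_mult:
  assumes "coprime 3 p" and "p \<ge> 2" and \<sigma>: "\<sigma> \<in> auto (C3p p)" and \<tau>: "\<tau> \<in> auto (C3p p)"
  shows "aut_coords (\<sigma> \<otimes>\<^bsub>AutoGroup (C3p p)\<^esub> \<tau>) = ring_mult_3p p (aut_coords \<sigma>) (aut_coords \<tau>)"
proof -
  have carrier: "carrier (C3p p) = {0..<3} \<times> {0..<int p}"
    using \<open>p \<ge> 2\<close> by (simp add: carrier_C3p)
  have "(\<sigma> \<otimes>\<^bsub>AutoGroup (C3p p)\<^esub> \<tau>) z = ring_mult_3p p (aut_coords \<sigma>) (ring_mult_3p p (aut_coords \<tau>) z)"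
    if z: "z \<in> carrier (C3p p)" for z
  proof -
    have "\<tau> z \<in> carrier (C3p p)"
      using \<tau> z by (auto simp: auto_def hom_def)
    then have "\<sigma> (\<tau> z) = ring_mult_3p p (aut_coords \<sigma>) (ring_mult_3p p (aut_coords \<tau>) z)"
      using auto_C3p(1)[OF assms(1,2) \<sigma>] auto_C3p(1)[OF assms(1,2) \<tau> z] by simp
    then show ?thesis
      using \<sigma> \<tau> z by (simp add: AutoGroup_mult compose_def)
  qed
  moreover have "(1, 0) \<in> carrier (C3p p)" "(0, 1) \<in> carrier (C3p p)"
    using carrier \<open>p \<ge> 2\<close> by auto
  ultimately show ?thesis
    by (simp add: aut_coords_def ring_mult_3p_def mod_mult_right_eq mult.commute)
qed

lemma aut_coords_one: "p \<ge> 2 \<Longrightarrow> aut_coords (\<one>\<^bsub>AutoGroup (C3p p)\<^esub>) = (1, 1)"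
  by (simp add: AutoGroup_def BijGroup_def aut_coords_def carrier_C3p)

section \<open>Subgroups of the unit group of \<open>\<int>/3 \<times> \<int>/p\<close>\<close>

definition unit_subgroup_3p :: "nat \<Rightarrow> (int \<times> int) set \<Rightarrow> bool" where
  "unit_subgroup_3p p T \<longleftrightarrow> T \<subseteq> {1..<3} \<times> {1..<int p} \<and> (1, 1) \<in> T \<and>
     (\<forall>w \<in> T. \<forall>w' \<in> T. ring_mult_3p p w w' \<in> T) \<and>
     (\<forall>w \<in> T. \<exists>w' \<in> T. ring_mult_3p p w w' = (1, 1))"

lemma unit_subgroup_3p_aut_coords:
  assumes "coprime 3 p" and "p \<ge> 2" and K: "subgroup K (AutoGroup (C3p p))"
  shows "unit_subgroup_3p p (aut_coords ` K)"
  unfolding unit_subgroup_3p_def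
proof (intro conjI ballI)
  let ?A = "AutoGroup (C3p p)"
  have auto: "\<sigma> \<in> auto (C3p p)" if "\<sigma> \<in> K" for \<sigma>
    using subgroup.mem_carrier[OF K that] by (simp add: AutoGroup_def)
  show "aut_coords ` K \<subseteq> {1..<3} \<times> {1..<int p}"
    using auto_C3p(2)[OF assms(1,2) auto] by (rule image_subsetI)
  show "(1, 1) \<in> aut_coords ` K"
    using imageI[OF subgroup.one_closed[OF K], of aut_coords]
    by (simp only: aut_coords_one[OF \<open>p \<ge> 2\<close>])
  fix w assume "w \<in> aut_coords ` K"
  then obtain \<sigma> where \<sigma>: "\<sigma> \<in> K" and w: "w = aut_coords \<sigma>"
    by blast
  show "\<exists>w' \<in> aut_coords ` K. ring_mult_3p p w w' = (1, 1)"
  proof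
    have inv: "inv\<^bsub>?A\<^esub> \<sigma> \<in> K"
      by (rule subgroup.m_inv_closed[OF K \<sigma>])
    then show "aut_coords (inv\<^bsub>?A\<^esub> \<sigma>) \<in> aut_coords ` K"
      by (rule imageI)
    have "\<sigma> \<otimes>\<^bsub>?A\<^esub> inv\<^bsub>?A\<^esub> \<sigma> = \<one>\<^bsub>?A\<^esub>"
      by (rule group.r_inv[OF group.AutoGroup[OF group_C3p] subgroup.mem_carrier[OF K \<sigma>]])
    then show "ring_mult_3p p w (aut_coords (inv\<^bsub>?A\<^esub> \<sigma>)) = (1, 1)"
      using aut_coords_mult[OF assms(1,2) auto[OF \<sigma>] auto[OF inv]] aut_coords_one[OF \<open>p \<ge> 2\<close>] w
      by simp
  qed
  fix w' assume "w' \<in> aut_coords ` K"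
  then obtain \<tau> where \<tau>: "\<tau> \<in> K" and w': "w' = aut_coords \<tau>"
    by blast
  have "aut_coords (\<sigma> \<otimes>\<^bsub>?A\<^esub> \<tau>) \<in> aut_coords ` K"
    using subgroup.m_closed[OF K \<sigma> \<tau>] by (rule imageI)
  then show "ring_mult_3p p w w' \<in> aut_coords ` K"
    by (simp only: w w' aut_coords_mult[OF assms(1,2) auto[OF \<sigma>] auto[OF \<tau>]])
qed

lemma unit_subgroup_3p_inverse:
  assumes T: "unit_subgroup_3p p T" and "(1, v) \<in> T"
  obtains w where "(1, w) \<in> T" and "(v * w) mod int p = 1"
proof -
  obtain w where "w \<in> T" and w: "ring_mult_3p p (1, v) w = (1, 1)"
    using T \<open>(1, v) \<in> T\<close> by (auto simp: unit_subgroup_3p_def)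
  moreover have "fst w \<in> {1..<3}"
    using T \<open>w \<in> T\<close> by (auto simp: unit_subgroup_3p_def)
  ultimately have "fst w = 1"
    by (auto simp: ring_mult_3p_def)
  then have "(1, snd w) \<in> T"
    using \<open>w \<in> T\<close> by (metis prod.collapse)
  moreover have "(v * snd w) mod int p = 1"
    using w by (simp add: ring_mult_3p_def)
  ultimately show ?thesis
    by (rule that)
qed

lemma unit_subgroup_3p_swap_rectangle:
  assumes "unit_subgroup_3p p T" and "(2, 1) \<in> T"
  shows "T = fst ` T \<times> snd ` T"
proof
  show "fst ` T \<times> snd ` T \<subseteq> T"
  proof clarify
    fix u v u' v' assume uv: "(u, v) \<in> T" and uv': "(u', v') \<in> T"
    have units: "u \<in> {1, 2}" "u' \<in> {1, 2}" "v' \<in> {1..<int p}"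
      using uv uv' assms(1) by (auto simp: unit_subgroup_3p_def)
    \<comment> \<open>multiplying by \<open>(2, 1)\<close> flips the first coordinate and keeps the second\<close>
    have "ring_mult_3p p (2, 1) (u', v') \<in> T"
      using assms uv' by (simp add: unit_subgroup_3p_def)
    then have "((2 * u') mod 3, v') \<in> T"
      using units by (simp add: ring_mult_3p_def)
    then show "(fst (u, v), snd (u', v')) \<in> T"
      using units uv' by auto
  qed
qed (rule subset_fst_snd)

lemma unit_subgroup_3p_graph:
  assumes T: "unit_subgroup_3p p T" and full: "snd ` T = {1..<int p}"
    and not_rectangle: "T \<noteq> fst ` T \<times> snd ` T"
  shows "(2, v) \<in> T \<longleftrightarrow> v \<in> {1..<int p} \<and> (1, v) \<notin> T"
proof
  have units: "T \<subseteq> {1..<3} \<times> {1..<int p}"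
    using T by (simp add: unit_subgroup_3p_def)
  assume "(2, v) \<in> T"
  then have "v \<in> {1..<int p}"
    using units by blast
  moreover have "(1, v) \<notin> T"
  proof
    assume "(1, v) \<in> T"
    then obtain w where "(1, w) \<in> T" and "(v * w) mod int p = 1"
      using unit_subgroup_3p_inverse[OF T] by blast
    then have "ring_mult_3p p (2, v) (1, w) = (2, 1)"
      by (simp add: ring_mult_3p_def)
    then have "(2, 1) \<in> T"
      using T \<open>(2, v) \<in> T\<close> \<open>(1, w) \<in> T\<close> by (metis unit_subgroup_3p_def)
    then show False
      using unit_subgroup_3p_swap_rectangle[OF T] not_rectangle by blast
  qed
  ultimately show "v \<in> {1..<int p} \<and> (1, v) \<notin> T" ..
next
  assume "v \<in> {1..<int p} \<and> (1, v) \<notin> T"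
  moreover obtain u where "(u, v) \<in> T"
    using full \<open>v \<in> {1..<int p} \<and> (1, v) \<notin> T\<close> by force
  moreover have "u \<in> {1, 2}"
    using T \<open>(u, v) \<in> T\<close> by (auto simp: unit_subgroup_3p_def)
  ultimately show "(2, v) \<in> T"
    by auto
qed

lemma ex_fst_2_if_not_rectangle:
  fixes T :: "(int \<times> int) set"
  assumes units: "T \<subseteq> {1..<3} \<times> {1..<int p}" and not_rectangle: "T \<noteq> fst ` T \<times> snd ` T"
  shows "\<exists>v. (2, v) \<in> T"
proof (rule ccontr)
  assume "\<nexists>v. (2, v) \<in> T"
  then have fst_1: "u = 1" if "(u, v) \<in> T" for u v
    using that units by (cases "u = 2") auto
  have "fst ` T \<times> snd ` T \<subseteq> T"
  proof clarify
    fix u v u' v' assume "(u, v) \<in> T" "(u', v') \<in> T"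
    moreover have "u = 1" "u' = 1"
      using fst_1 calculation by blast+
    ultimately show "(fst (u, v), snd (u', v')) \<in> T"
      by simp
  qed
  then show False
    using not_rectangle subset_fst_snd by blast
qed

lemma card_eq_twice_if_swapped:
  assumes "finite U" and "H \<subseteq> U" and "inj_on f U"
    and "f ` H \<subseteq> U - H" and "f ` (U - H) \<subseteq> H"
  shows "card U = 2 * card H"
proof -
  have "finite H"
    using assms(1,2) finite_subset by blast
  have "card H \<le> card (U - H)"
    using card_inj_on_le[OF inj_on_subset[OF assms(3,2)] assms(4)] assms(1) by simp
  moreover have "card (U - H) \<le> card H"
    by (rule card_inj_on_le[OF inj_on_subset[OF assms(3) Diff_subset] assms(5) \<open>finite H\<close>])
  moreover have "card (U - H) = card U - card H" "card H \<le> card U"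
    using card_Diff_subset[OF \<open>finite H\<close> assms(2)] card_mono[OF assms(1,2)] by simp_all
  ultimately show ?thesis
    by linarith
qed

lemma card_unit_subgroup_3p_kernel:
  assumes prime: "Factorial_Ring.prime p" and T: "unit_subgroup_3p p T"
    and not_rectangle: "T \<noteq> fst ` T \<times> snd ` T"
    and graph: "\<And>v. (2, v) \<in> T \<longleftrightarrow> v \<in> {1..<int p} \<and> (1, v) \<notin> T"
  shows "card {1..<int p} = 2 * card {v. (1, v) \<in> T}"
proof -
  let ?U = "{1..<int p}" and ?H = "{v. (1, v) \<in> T}"
  have units: "T \<subseteq> {1..<3} \<times> {1..<int p}"
    and mult: "\<And>w w'. w \<in> T \<Longrightarrow> w' \<in> T \<Longrightarrow> ring_mult_3p p w w' \<in> T"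
    using T by (simp_all add: unit_subgroup_3p_def)
  obtain v\<^sub>2 where v\<^sub>2: "(2, v\<^sub>2) \<in> T"
    using ex_fst_2_if_not_rectangle[OF units not_rectangle] by blast
  define f where "f v = (v\<^sub>2 * v) mod int p" for v
  \<comment> \<open>multiplication by \<open>(2, v\<^sub>2)\<close> swaps the two fibres of \<open>T\<close>\<close>
  have "f ` ?H \<subseteq> ?U - ?H"
  proof
    fix y assume "y \<in> f ` ?H"
    then obtain v where "(1, v) \<in> T" "y = f v"
      by blast
    then have "(2, y) \<in> T"
      using mult[OF v\<^sub>2] by (force simp: ring_mult_3p_def f_def)
    then show "y \<in> ?U - ?H"
      using graph by blast
  qed
  moreover have "f ` (?U - ?H) \<subseteq> ?H"
  proof
    fix y assume "y \<in> f ` (?U - ?H)"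
    then obtain v where "(2, v) \<in> T" "y = f v"
      using graph by blast
    then show "y \<in> ?H"
      using mult[OF v\<^sub>2] by (force simp: ring_mult_3p_def f_def)
  qed
  moreover have "v\<^sub>2 \<in> ?U"
    using v\<^sub>2 units by blast
  then have "inj_on f ?U"
    unfolding f_def by (rule inj_on_subset[OF inj_on_mult_mod[OF coprime_unit_mod_prime[OF prime]]]) auto
  moreover have "?H \<subseteq> ?U"
    using units by blast
  ultimately show ?thesis
    by (intro card_eq_twice_if_swapped) auto
qed

lemma index2_sub_unit_subgroup_3p:
  assumes prime: "Factorial_Ring.prime p" and T: "unit_subgroup_3p p T"
    and index: "card {1..<int p} = 2 * card {v. (1, v) \<in> T}"
  shows "index2_sub p = scale_mod p ` {v. (1, v) \<in> T}"
proof (rule index2_sub_eqI[OF prime])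
  let ?H = "{v. (1, v) \<in> T}"
  have H: "?H \<subseteq> {1..<int p}"
    using T by (auto simp: unit_subgroup_3p_def)
  have "1 \<in> ?H"
    using T by (simp add: unit_subgroup_3p_def)
  moreover have "(v * w) mod int p \<in> ?H" if "v \<in> ?H" "w \<in> ?H" for v w
    using T that by (force simp: unit_subgroup_3p_def ring_mult_3p_def)
  moreover have "\<exists>w \<in> ?H. (v * w) mod int p = 1" if "v \<in> ?H" for v
    using unit_subgroup_3p_inverse[OF T] that by blast
  ultimately show "subgroup (scale_mod p ` ?H) (AutoGroup (integer_mod_group p))"
    by (rule subgroup_scale_mod_image[OF prime H])
  have "inj_on (scale_mod p) ?H"
    using inj_on_scale_mod[OF prime_ge_2_nat[OF prime]] by (rule inj_on_subset) (use H in auto)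
  then show "card (carrier (AutoGroup (integer_mod_group p))) = 2 * card (scale_mod p ` ?H)"
    using carrier_AutoGroup_integer_mod_group[OF prime] inj_on_scale_mod[OF prime_ge_2_nat[OF prime]] index
    by (simp add: card_image inj_on_subset)
qed

section \<open>Basic sets as orbits\<close>

definition orbit_3p :: "nat \<Rightarrow> (int \<times> int) set \<Rightarrow> int \<times> int \<Rightarrow> (int \<times> int) set" where
  "orbit_3p p T z = (\<lambda>w. ring_mult_3p p w z) ` T"

lemma cyc_basic_C3p:
  assumes "coprime 3 p" and "p \<ge> 2" and "K \<subseteq> auto (C3p p)"
  shows "cyc_basic (C3p p) K = orbit_3p p (aut_coords ` K) ` carrier (C3p p)"
proof -
  have orbit: "{\<sigma> z | \<sigma>. \<sigma> \<in> K} = orbit_3p p (aut_coords ` K) z" if z: "z \<in> carrier (C3p p)" for z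
  proof -
    have "{\<sigma> z | \<sigma>. \<sigma> \<in> K} = (\<lambda>\<sigma>. \<sigma> z) ` K"
      by (rule Setcompr_eq_image)
    also have "\<dots> = (\<lambda>\<sigma>. ring_mult_3p p (aut_coords \<sigma>) z) ` K"
      using auto_C3p(1)[OF assms(1,2) _ z] assms(3) by (intro image_cong) auto
    finally show ?thesis
      by (simp add: orbit_3p_def image_image)
  qed
  have "cyc_basic (C3p p) K = (\<lambda>z. {\<sigma> z | \<sigma>. \<sigma> \<in> K}) ` carrier (C3p p)"
    unfolding cyc_basic_def by (rule Setcompr_eq_image)
  also have "\<dots> = orbit_3p p (aut_coords ` K) ` carrier (C3p p)"
    using orbit by (rule image_cong[OF refl])
  finally show ?thesis .
qed

lemma restr_basic_image:
  assumes "\<And>z. z \<in> C \<Longrightarrow> z \<in> f z" and "\<And>z. z \<in> C \<inter> S \<Longrightarrow> f z \<subseteq> S"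
  shows "restr_basic (f ` C) S = f ` (C \<inter> S)"
  unfolding restr_basic_def using assms by blast

lemma C3_sub_eq: "C3_sub p = {0..<3} \<times> {0}"
  by (simp add: C3_sub_def carrier_integer_mod_group)

lemma Cp_sub_eq: "p > 0 \<Longrightarrow> Cp_sub p = {0} \<times> {0..<int p}"
  by (simp add: Cp_sub_def carrier_integer_mod_group)

lemma orbit_3p_self:
  assumes "(1, 1) \<in> T" and "z \<in> {0..<3} \<times> {0..<int p}"
  shows "z \<in> orbit_3p p T z"
proof -
  have "ring_mult_3p p (1, 1) z = z"
    using assms(2) by (auto simp: ring_mult_3p_def)
  then show ?thesis
    using assms(1) unfolding orbit_3p_def by (metis image_eqI)
qed

lemma restr_orbits_C3_sub:
  assumes "(1, 1) \<in> T" and "p > 0"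
  shows "restr_basic (orbit_3p p T ` carrier (C3p p)) (C3_sub p) = orbit_3p p T ` C3_sub p"
proof -
  have "carrier (C3p p) \<inter> C3_sub p = C3_sub p"
    using \<open>p > 0\<close> by (auto simp: carrier_C3p C3_sub_eq)
  moreover have "orbit_3p p T z \<subseteq> C3_sub p" if "z \<in> C3_sub p" for z
    using that by (auto simp: orbit_3p_def ring_mult_3p_def C3_sub_eq)
  ultimately show ?thesis
    using restr_basic_image[of "carrier (C3p p)" "orbit_3p p T" "C3_sub p"]
      orbit_3p_self[OF assms(1)] \<open>p > 0\<close> by (simp add: carrier_C3p)
qed

lemma restr_orbits_Cp_sub:
  assumes "(1, 1) \<in> T" and "p > 0"
  shows "restr_basic (orbit_3p p T ` carrier (C3p p)) (Cp_sub p) = orbit_3p p T ` Cp_sub p"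
proof -
  have "carrier (C3p p) \<inter> Cp_sub p = Cp_sub p"
    using \<open>p > 0\<close> by (auto simp: carrier_C3p Cp_sub_eq)
  moreover have "orbit_3p p T z \<subseteq> Cp_sub p" if "z \<in> Cp_sub p" for z
    using that \<open>p > 0\<close> by (auto simp: orbit_3p_def ring_mult_3p_def Cp_sub_eq)
  ultimately show ?thesis
    using restr_basic_image[of "carrier (C3p p)" "orbit_3p p T" "Cp_sub p"]
      orbit_3p_self[OF assms(1)] \<open>p > 0\<close> by (simp add: carrier_C3p)
qed

lemma orbit_3p_product:
  assumes "T = fst ` T \<times> snd ` T"
  shows "(\<lambda>(x, y). x \<otimes>\<^bsub>C3p p\<^esub> y) ` (orbit_3p p T (a, 0) \<times> orbit_3p p T (0, b)) = orbit_3p p T (a, b)"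
proof (intro Set.set_eqI iffI)
  fix z
  assume "z \<in> (\<lambda>(x, y). x \<otimes>\<^bsub>C3p p\<^esub> y) ` (orbit_3p p T (a, 0) \<times> orbit_3p p T (0, b))"
  then obtain x y where "x \<in> orbit_3p p T (a, 0)" "y \<in> orbit_3p p T (0, b)" and "z = x \<otimes>\<^bsub>C3p p\<^esub> y"
    by auto
  then obtain w w' where "w \<in> T" "w' \<in> T"
    and z: "z = ring_mult_3p p w (a, 0) \<otimes>\<^bsub>C3p p\<^esub> ring_mult_3p p w' (0, b)"
    unfolding orbit_3p_def by blast
  then have "(fst w, snd w') \<in> fst ` T \<times> snd ` T"
    by blast
  then have "(fst w, snd w') \<in> T"
    by (simp only: assms[symmetric])
  moreover have "z = ring_mult_3p p (fst w, snd w') (a, b)"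
    using z by (simp add: ring_mult_3p_def)
  ultimately show "z \<in> orbit_3p p T (a, b)"
    unfolding orbit_3p_def by blast
next
  fix z
  assume "z \<in> orbit_3p p T (a, b)"
  then obtain w where "w \<in> T" and z: "z = ring_mult_3p p w (a, b)"
    unfolding orbit_3p_def by blast
  have "z = ring_mult_3p p w (a, 0) \<otimes>\<^bsub>C3p p\<^esub> ring_mult_3p p w (0, b)"
    using z by (simp add: ring_mult_3p_def)
  moreover have "ring_mult_3p p w (a, 0) \<in> orbit_3p p T (a, 0)" "ring_mult_3p p w (0, b) \<in> orbit_3p p T (0, b)"
    using \<open>w \<in> T\<close> unfolding orbit_3p_def by blast+
  ultimately show "z \<in> (\<lambda>(x, y). x \<otimes>\<^bsub>C3p p\<^esub> y) ` (orbit_3p p T (a, 0) \<times> orbit_3p p T (0, b))"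
    by blast
qed

lemma tensor_orbits_3p:
  assumes "T = fst ` T \<times> snd ` T" and "p > 0"
  shows "tensor_basic (C3p p) (orbit_3p p T ` C3_sub p) (orbit_3p p T ` Cp_sub p)
    = orbit_3p p T ` carrier (C3p p)"
proof (intro Set.set_eqI iffI)
  fix Z assume "Z \<in> tensor_basic (C3p p) (orbit_3p p T ` C3_sub p) (orbit_3p p T ` Cp_sub p)"
  then obtain a b where "a \<in> {0..<3}" "b \<in> {0..<int p}"
    and "Z = (\<lambda>(x, y). x \<otimes>\<^bsub>C3p p\<^esub> y) ` (orbit_3p p T (a, 0) \<times> orbit_3p p T (0, b))"
    using \<open>p > 0\<close> unfolding tensor_basic_def C3_sub_eq Cp_sub_eq[OF \<open>p > 0\<close>] by blast
  then show "Z \<in> orbit_3p p T ` carrier (C3p p)"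
    using \<open>p > 0\<close> by (simp add: orbit_3p_product[OF assms(1)] carrier_C3p)
next
  fix Z assume "Z \<in> orbit_3p p T ` carrier (C3p p)"
  then obtain a b where "a \<in> {0..<3}" "b \<in> {0..<int p}" and "Z = orbit_3p p T (a, b)"
    using \<open>p > 0\<close> by (auto simp: carrier_C3p)
  then have "Z = (\<lambda>(x, y). x \<otimes>\<^bsub>C3p p\<^esub> y) ` (orbit_3p p T (a, 0) \<times> orbit_3p p T (0, b))"
    and "orbit_3p p T (a, 0) \<in> orbit_3p p T ` C3_sub p" "orbit_3p p T (0, b) \<in> orbit_3p p T ` Cp_sub p"
    using \<open>p > 0\<close> by (simp_all add: orbit_3p_product[OF assms(1)] C3_sub_eq Cp_sub_eq[OF \<open>p > 0\<close>])
  then show "Z \<in> tensor_basic (C3p p) (orbit_3p p T ` C3_sub p) (orbit_3p p T ` Cp_sub p)"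
    unfolding tensor_basic_def by blast
qed

lemma mem_orbit_3p_Cp_generator:
  assumes "T \<subseteq> {1..<3} \<times> {1..<int p}" and "v \<in> {1..<int p}"
  shows "(0, v) \<in> orbit_3p p T (0, 1) \<longleftrightarrow> v \<in> snd ` T"
proof
  assume "(0, v) \<in> orbit_3p p T (0, 1)"
  then obtain w where "w \<in> T" and "(0, v) = ring_mult_3p p w (0, 1)"
    unfolding orbit_3p_def by blast
  then have "v = snd w"
    using assms(1) by (auto simp: ring_mult_3p_def)
  then show "v \<in> snd ` T"
    using \<open>w \<in> T\<close> by blast
next
  assume "v \<in> snd ` T"
  then obtain u where "(u, v) \<in> T"
    by force
  moreover have "(0, v) = ring_mult_3p p (u, v) (0, 1)"
    using assms(2) by (simp add: ring_mult_3p_def)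
  ultimately show "(0, v) \<in> orbit_3p p T (0, 1)"
    unfolding orbit_3p_def by blast
qed

lemma card_orbits_Cp_sub:
  assumes units: "T \<subseteq> {1..<3} \<times> {1..<int p}" and "(1, 1) \<in> T" and "p \<ge> 2"
    and two: "card (orbit_3p p T ` Cp_sub p) = 2"
  shows "snd ` T = {1..<int p}"
proof
  show "snd ` T \<subseteq> {1..<int p}"
    using units by auto
  show "{1..<int p} \<subseteq> snd ` T"
  proof (rule ccontr)
    assume "\<not> {1..<int p} \<subseteq> snd ` T"
    then obtain v where v: "v \<in> {1..<int p}" "v \<notin> snd ` T"
      by blast
    let ?O = "orbit_3p p T"
    have "?O (0, 0) = {(0, 0)}"
      using \<open>(1, 1) \<in> T\<close> by (auto simp: orbit_3p_def ring_mult_3p_def)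
    then have "(0, 1) \<notin> ?O (0, 0)" "(0, v) \<notin> ?O (0, 0)" "(0, v) \<notin> ?O (0, 1)"
      using v mem_orbit_3p_Cp_generator[OF units v(1)] by auto
    moreover have "(0, 1) \<in> ?O (0, 1)" "(0, v) \<in> ?O (0, v)"
      using orbit_3p_self[OF \<open>(1, 1) \<in> T\<close>] v \<open>p \<ge> 2\<close> by auto
    ultimately have "?O (0, 0) \<noteq> ?O (0, 1)" "?O (0, 0) \<noteq> ?O (0, v)" "?O (0, 1) \<noteq> ?O (0, v)"
      by blast+
    then have "card {?O (0, 0), ?O (0, 1), ?O (0, v)} = 3"
      by simp
    moreover have "{?O (0, 0), ?O (0, 1), ?O (0, v)} \<subseteq> ?O ` Cp_sub p"
      using v \<open>p \<ge> 2\<close> by (auto simp: Cp_sub_eq)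
    moreover have "finite (?O ` Cp_sub p)"
      using \<open>p \<ge> 2\<close> by (simp add: Cp_sub_eq)
    ultimately have "3 \<le> card (?O ` Cp_sub p)"
      by (metis card_mono)
    with two show False
      by simp
  qed
qed

lemma aut_coords_full_not_rectangle:
  assumes "coprime 3 p" and "p \<ge> 2" and "K \<subseteq> auto (C3p p)"
    and T: "unit_subgroup_3p p (aut_coords ` K)"
    and rank: "rk (restr_basic (cyc_basic (C3p p) K) (Cp_sub p)) = 2"
    and not_tensor: "cyc_basic (C3p p) K \<noteq>
           tensor_basic (C3p p) (restr_basic (cyc_basic (C3p p) K) (C3_sub p))
                                (restr_basic (cyc_basic (C3p p) K) (Cp_sub p))"
  shows "snd ` aut_coords ` K = {1..<int p}"
    and "aut_coords ` K \<noteq> fst ` aut_coords ` K \<times> snd ` aut_coords ` K"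
proof -
  let ?T = "aut_coords ` K"
  have units: "?T \<subseteq> {1..<3} \<times> {1..<int p}" and one: "(1, 1) \<in> ?T" and "p > 0"
    using T \<open>p \<ge> 2\<close> by (simp_all add: unit_subgroup_3p_def)
  note cyc = cyc_basic_C3p[OF assms(1-3)]
  show "snd ` ?T = {1..<int p}"
    using card_orbits_Cp_sub[OF units one \<open>p \<ge> 2\<close>] rank
    by (simp add: cyc rk_def restr_orbits_Cp_sub[OF one \<open>p > 0\<close>])
  show "?T \<noteq> fst ` ?T \<times> snd ` ?T"
    using tensor_orbits_3p[OF _ \<open>p > 0\<close>] not_tensor
    by (auto simp: cyc restr_orbits_C3_sub[OF one \<open>p > 0\<close>] restr_orbits_Cp_sub[OF one \<open>p > 0\<close>])
qed

section \<open>The S-ring of W_0\<close>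

lemma mem_W0_iff_coords:
  assumes prime: "Factorial_Ring.prime p" and "coprime 3 p" and \<sigma>: "\<sigma> \<in> auto (C3p p)"
  shows "\<sigma> \<in> W0 p \<longleftrightarrow>
    ((\<forall>a \<in> {0..<3}. scale_mod 3 (fst (aut_coords \<sigma>)) a = a)
      \<longleftrightarrow> scale_mod p (snd (aut_coords \<sigma>)) \<in> index2_sub p)"
proof -
  have "p \<ge> 2"
    using prime prime_ge_2_nat by blast
  obtain u v where coords: "aut_coords \<sigma> = (u, v)"
    by fastforce
  have u: "u \<in> {1..<3}" and v: "v \<in> {1..<int p}"
    using auto_C3p(2)[OF \<open>coprime 3 p\<close> \<open>p \<ge> 2\<close> \<sigma>] coords by auto
  have carriers: "carrier (integer_mod_group 3) = {0..<3}" "carrier (integer_mod_group p) = {0..<int p}"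
    using \<open>p \<ge> 2\<close> by (simp_all add: carrier_integer_mod_group)
  have \<sigma>_scale: "\<sigma> (a, b) = (scale_mod 3 u a, scale_mod p v b)"
    if "a \<in> {0..<3}" "b \<in> {0..<int p}" for a b
    using auto_C3p(1)[OF \<open>coprime 3 p\<close> \<open>p \<ge> 2\<close> \<sigma>] that coords \<open>p \<ge> 2\<close>
    by (simp add: carrier_C3p ring_mult_3p_def scale_mod_def)
  show ?thesis
    unfolding coords fst_conv snd_conv
  proof
    assume "\<sigma> \<in> W0 p"
    then obtain \<alpha> \<beta> where \<alpha>: "\<alpha> \<in> auto (integer_mod_group 3)" and \<beta>: "\<beta> \<in> auto (integer_mod_group p)"
      and \<sigma>_\<alpha>\<beta>: "\<And>a b. a \<in> {0..<3} \<Longrightarrow> b \<in> {0..<int p} \<Longrightarrow> \<sigma> (a, b) = (\<alpha> a, \<beta> b)"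
      and iff: "(\<forall>a \<in> {0..<3}. \<alpha> a = a) \<longleftrightarrow> \<beta> \<in> index2_sub p"
      unfolding W0_def carriers by blast
    have "\<alpha> 1 = u" "\<beta> 1 = v"
      using \<sigma>_\<alpha>\<beta>[of 1 0] \<sigma>_\<alpha>\<beta>[of 0 1] \<sigma>_scale[of 1 0] \<sigma>_scale[of 0 1] u v \<open>p \<ge> 2\<close>
      by (auto simp: scale_mod_def)
    then have "\<alpha> = scale_mod 3 u" "\<beta> = scale_mod p v"
      using auto_integer_mod_group(1)[OF _ \<alpha>] auto_integer_mod_group(1)[OF \<open>p \<ge> 2\<close> \<beta>] by auto
    then show "(\<forall>a \<in> {0..<3}. scale_mod 3 u a = a) \<longleftrightarrow> scale_mod p v \<in> index2_sub p"
      using iff by simp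
  next
    assume "(\<forall>a \<in> {0..<3}. scale_mod 3 u a = a) \<longleftrightarrow> scale_mod p v \<in> index2_sub p"
    moreover have "scale_mod 3 u \<in> auto (integer_mod_group 3)"
      using scale_mod_in_auto coprime_unit_mod_prime[of 3] u by simp
    moreover have "scale_mod p v \<in> auto (integer_mod_group p)"
      using scale_mod_in_auto coprime_unit_mod_prime[OF prime v] \<open>p \<ge> 2\<close> by simp
    ultimately show "\<sigma> \<in> W0 p"
      unfolding W0_def carriers using \<sigma> \<sigma>_scale by blast
  qed
qed

lemma mem_W0_iff:
  assumes prime: "Factorial_Ring.prime p" and "coprime 3 p"
    and index2: "index2_sub p = scale_mod p ` H" and H: "H \<subseteq> {1..<int p}"
    and \<sigma>: "\<sigma> \<in> auto (C3p p)"
  shows "\<sigma> \<in> W0 p \<longleftrightarrow> (fst (aut_coords \<sigma>) = 1 \<longleftrightarrow> snd (aut_coords \<sigma>) \<in> H)"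
proof -
  have "p \<ge> 2"
    using prime prime_ge_2_nat by blast
  obtain u v where coords: "aut_coords \<sigma> = (u, v)" and u: "u \<in> {1..<3}" and v: "v \<in> {1..<int p}"
    using auto_C3p(2)[OF \<open>coprime 3 p\<close> \<open>p \<ge> 2\<close> \<sigma>] by auto
  have "(\<forall>a \<in> {0..<3}. scale_mod 3 u a = a) \<longleftrightarrow> u = 1"
  proof
    assume "\<forall>a \<in> {0..<3}. scale_mod 3 u a = a"
    then have "u mod 3 = 1"
      by (auto simp: scale_mod_def dest: bspec[of _ _ 1])
    then show "u = 1"
      using u by simp
  qed (simp add: scale_mod_def)
  moreover have "scale_mod p v \<in> index2_sub p \<longleftrightarrow> v \<in> H"
  proof -
    have "H \<subseteq> {0..<int p}" "v \<in> {0..<int p}"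
      using H v by auto
    then show ?thesis
      using inj_on_image_mem_iff[OF inj_on_scale_mod[OF \<open>p \<ge> 2\<close>]] index2 by simp
  qed
  ultimately show ?thesis
    using mem_W0_iff_coords[OF prime \<open>coprime 3 p\<close> \<sigma>] coords by simp
qed

lemma subgroup_eq_W0:
  assumes prime: "Factorial_Ring.prime p" and "coprime 3 p" and K: "K \<subseteq> auto (C3p p)"
    and T: "unit_subgroup_3p p (aut_coords ` K)"
    and graph: "\<And>v. (2, v) \<in> aut_coords ` K \<longleftrightarrow> v \<in> {1..<int p} \<and> (1, v) \<notin> aut_coords ` K"
    and index2: "index2_sub p = scale_mod p ` {v. (1, v) \<in> aut_coords ` K}"
  shows "K = W0 p"
proof -
  have "p \<ge> 2"
    using prime prime_ge_2_nat by blast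
  have "\<sigma> \<in> K \<longleftrightarrow> \<sigma> \<in> W0 p" if \<sigma>: "\<sigma> \<in> auto (C3p p)" for \<sigma>
  proof -
    obtain u v where coords: "aut_coords \<sigma> = (u, v)" "u \<in> {1..<3}" "v \<in> {1..<int p}"
      using auto_C3p(2)[OF \<open>coprime 3 p\<close> \<open>p \<ge> 2\<close> \<sigma>] by auto
    then have "u = 1 \<or> u = 2"
      by auto
    then have "(u, v) \<in> aut_coords ` K \<longleftrightarrow> (u = 1 \<longleftrightarrow> (1, v) \<in> aut_coords ` K)"
      using graph[of v] coords by auto
    moreover have "{v. (1, v) \<in> aut_coords ` K} \<subseteq> {1..<int p}"
      using T by (auto simp: unit_subgroup_3p_def)
    ultimately show ?thesis
      using aut_coords_mem_iff[OF \<open>coprime 3 p\<close> \<open>p \<ge> 2\<close> K \<sigma>]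
        mem_W0_iff[OF prime \<open>coprime 3 p\<close> index2 _ \<sigma>] coords by auto
  qed
  then show ?thesis
    using K by (auto simp: W0_def)
qed

theorem lemma3p1:
  fixes p :: nat and K :: "(int \<times> int \<Rightarrow> int \<times> int) set"
  assumes "Factorial_Ring.prime p" and "p \<ge> 5"
    and "subgroup K (AutoGroup (C3p p))"
    and "rk (restr_basic (cyc_basic (C3p p) K) (Cp_sub p)) = 2"
    and "cyc_basic (C3p p) K \<noteq>
           tensor_basic (C3p p) (restr_basic (cyc_basic (C3p p) K) (C3_sub p))
                                (restr_basic (cyc_basic (C3p p) K) (Cp_sub p))"
  shows "cyc_basic (C3p p) K = cyc_basic (C3p p) (W0 p)"
proof -
  have "coprime 3 p" "p \<ge> 2"
    using assms(1,2) by (simp_all add: primes_coprime)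
  have K: "K \<subseteq> auto (C3p p)"
    using subgroup.subset[OF assms(3)] by (simp add: AutoGroup_def)
  have T: "unit_subgroup_3p p (aut_coords ` K)"
    by (rule unit_subgroup_3p_aut_coords[OF \<open>coprime 3 p\<close> \<open>p \<ge> 2\<close> assms(3)])
  note full_not_rectangle = aut_coords_full_not_rectangle[OF \<open>coprime 3 p\<close> \<open>p \<ge> 2\<close> K T assms(4,5)]
  note graph = unit_subgroup_3p_graph[OF T full_not_rectangle]
  have "index2_sub p = scale_mod p ` {v. (1, v) \<in> aut_coords ` K}"
    using index2_sub_unit_subgroup_3p[OF assms(1) T]
      card_unit_subgroup_3p_kernel[OF assms(1) T full_not_rectangle(2) graph] by blast
  then have "K = W0 p"
    by (rule subgroup_eq_W0[OF assms(1) \<open>coprime 3 p\<close> K T graph])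
  then show ?thesis
    by simp
qed

end
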